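(* For all integers $m\geq 3$ and $n\geq 3$, $1\leq \gamma_{sR}(C_m\vee C_n)\leq 4$.
   Context: $C_n$ denotes the cycle on $n$ vertices. For a graph $G=(V,E)$ and $x\in V$, $N_G[x]=\{x\}\cup\{y: xy\in E\}$. A signed Roman dominating function (SRDF) on $G$ is a function $f:V\to\{-1,1,2\}$ such that (a) $\sum_{y\in N_G[x]}f(y)\geq 1$ for every $x\in V$, and (b) every vertex $x$ with $f(x)=-1$ is adjacent to at least one vertex $y$ with $f(y)=2$. The weight of $f$ is $\sum_{x\in V}f(x)$, and $\gamma_{sR}(G)$ is the minimum weight of an SRDF on $G$. The join $G_1\vee G_2$ of two graphs has vertex set $V(G_1)\cup V(G_2)$ (disjoint union) and edge set $E(G_1)\cup E(G_2)\cup\{uv: u\in V(G_1), v\in V(G_2)\}$. *)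

theory Defs
  imports Main
begin

text \<open>A (finite simple) graph is represented by a vertex set V and an adjacency
relation E (symmetric, irreflexive), restricted to V.\<close>

definition closed_nbhd :: "'a set \<Rightarrow> ('a \<Rightarrow> 'a \<Rightarrow> bool) \<Rightarrow> 'a \<Rightarrow> 'a set" where
  "closed_nbhd V E x = {x} \<union> {y \<in> V. E x y}"

definition is_SRDF :: "'a set \<Rightarrow> ('a \<Rightarrow> 'a \<Rightarrow> bool) \<Rightarrow> ('a \<Rightarrow> int) \<Rightarrow> bool" where
  "is_SRDF V E f \<longleftrightarrow>
     (\<forall>x\<in>V. f x \<in> {-1, 1, 2}) \<and>
     (\<forall>x\<in>V. (\<Sum>y\<in>closed_nbhd V E x. f y) \<ge> 1) \<and>
     (\<forall>x\<in>V. f x = -1 \<longrightarrow> (\<exists>y\<in>V. E x y \<and> f y = 2))"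

definition weight :: "'a set \<Rightarrow> ('a \<Rightarrow> int) \<Rightarrow> int" where
  "weight V f = (\<Sum>x\<in>V. f x)"

text \<open>Signed Roman domination number: minimum weight of an SRDF. Functions are
compared only by their values on V (values outside V are irrelevant to weight).\<close>
definition gamma_sR :: "'a set \<Rightarrow> ('a \<Rightarrow> 'a \<Rightarrow> bool) \<Rightarrow> int" where
  "gamma_sR V E = Min {weight V f | f. is_SRDF V E f}"

definition cycle_verts :: "nat \<Rightarrow> nat set" where
  "cycle_verts n = {0..<n}"

definition cycle_adj :: "nat \<Rightarrow> nat \<Rightarrow> nat \<Rightarrow> bool" where
  "cycle_adj n i j \<longleftrightarrow> i < n \<and> j < n \<and> i \<noteq> j \<and> (j = (i + 1) mod n \<or> i = (j + 1) mod n)"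

definition join_verts :: "'a set \<Rightarrow> 'b set \<Rightarrow> ('a + 'b) set" where
  "join_verts V1 V2 = Inl ` V1 \<union> Inr ` V2"

fun join_adj :: "'a set \<Rightarrow> ('a \<Rightarrow> 'a \<Rightarrow> bool) \<Rightarrow> 'b set \<Rightarrow> ('b \<Rightarrow> 'b \<Rightarrow> bool)
                  \<Rightarrow> ('a + 'b) \<Rightarrow> ('a + 'b) \<Rightarrow> bool" where
  "join_adj V1 E1 V2 E2 (Inl u) (Inl v) = E1 u v"
| "join_adj V1 E1 V2 E2 (Inr u) (Inr v) = E2 u v"
| "join_adj V1 E1 V2 E2 (Inl u) (Inr v) = (u \<in> V1 \<and> v \<in> V2)"
| "join_adj V1 E1 V2 E2 (Inr u) (Inl v) = (u \<in> V2 \<and> v \<in> V1)"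

end

theory Submission
  imports Defs
begin

text \<open>Lower bound: let \<open>G\<^sub>1, G\<^sub>2\<close> be regular, with \<open>m, n\<close> vertices and closed neighbourhoods
of sizes \<open>k\<^sub>1, k\<^sub>2\<close>, and let \<open>A, B\<close> be the weights an SRDF of \<open>G\<^sub>1 \<or> G\<^sub>2\<close> puts on the two sides.
Summing the neighbourhood condition over the vertices of \<open>G\<^sub>1\<close> counts each of them \<open>k\<^sub>1\<close>
times and each vertex of \<open>G\<^sub>2\<close> \<open>m\<close> times, so \<open>k\<^sub>1 A + m B \<ge> m\<close>; likewise \<open>k\<^sub>2 B + n A \<ge> n\<close>.
As \<open>k\<^sub>1 \<le> m\<close> and \<open>k\<^sub>2 \<le> n\<close>, these force \<open>A + B \<ge> 1\<close>.
Upper bound: on each cycle put \<open>2, -1, 1, -1, 1, \<dots>\<close> (with a second \<open>2\<close> at position 2 when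
the length is even); every closed neighbourhood within the cycle then has weight \<open>\<ge> -1\<close>
and the whole cycle weight 2, so in the join every closed neighbourhood has weight \<open>\<ge> 1\<close>.\<close>

lemma closed_nbhd_subset: "x \<in> V \<Longrightarrow> closed_nbhd V E x \<subseteq> V"
  by (auto simp: closed_nbhd_def)

lemma finite_closed_nbhd: "finite V \<Longrightarrow> finite (closed_nbhd V E x)"
  by (simp add: closed_nbhd_def)

lemma sum_closed_nbhd_regular:
  fixes f :: "'a \<Rightarrow> 'b::comm_semiring_1"
  assumes "finite V" and sym: "\<And>x y. E x y \<Longrightarrow> E y x"
    and reg: "\<And>y. y \<in> V \<Longrightarrow> card (closed_nbhd V E y) = k"
  shows "(\<Sum>x\<in>V. \<Sum>y\<in>closed_nbhd V E x. f y) = of_nat k * (\<Sum>y\<in>V. f y)"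
proof -
  have nbhd: "closed_nbhd V E x = {y \<in> V. y \<in> closed_nbhd V E x}" if "x \<in> V" for x
    using closed_nbhd_subset[OF that] by blast
  have dual: "{x \<in> V. y \<in> closed_nbhd V E x} = closed_nbhd V E y" if "y \<in> V" for y
    using that sym by (auto simp: closed_nbhd_def)
  have "(\<Sum>x\<in>V. \<Sum>y\<in>closed_nbhd V E x. f y) = (\<Sum>x\<in>V. \<Sum>y\<in>{y \<in> V. y \<in> closed_nbhd V E x}. f y)"
    using nbhd by (intro sum.cong) auto
  also have "\<dots> = (\<Sum>y\<in>V. \<Sum>x\<in>{x \<in> V. y \<in> closed_nbhd V E x}. f y)"
    by (rule sum.swap_restrict[OF \<open>finite V\<close> \<open>finite V\<close>])
  also have "\<dots> = (\<Sum>y\<in>V. of_nat k * f y)"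
    using dual reg by (intro sum.cong) auto
  finally show ?thesis by (simp add: sum_distrib_left)
qed

lemma regular_side_bound:
  fixes F :: "'a \<Rightarrow> int"
  assumes "finite V" "\<And>x y. E x y \<Longrightarrow> E y x" "\<And>y. y \<in> V \<Longrightarrow> card (closed_nbhd V E y) = k"
    and nbhd: "\<And>x. x \<in> V \<Longrightarrow> (\<Sum>y\<in>closed_nbhd V E x. F y) + B \<ge> 1"
  shows "int k * (\<Sum>y\<in>V. F y) + int (card V) * B \<ge> int (card V)"
proof -
  have "(\<Sum>x\<in>V. 1) \<le> (\<Sum>x\<in>V. (\<Sum>y\<in>closed_nbhd V E x. F y) + B)"
    using nbhd by (intro sum_mono) auto
  also have "\<dots> = int k * (\<Sum>y\<in>V. F y) + int (card V) * B"
    by (simp add: sum.distrib sum_closed_nbhd_regular[OF assms(1-3)])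
  finally show ?thesis by simp
qed

lemma two_sided_bound:
  fixes A B :: int
  assumes "0 < k\<^sub>1" "k\<^sub>1 \<le> m" "0 < k\<^sub>2" "k\<^sub>2 \<le> n"
    and "k\<^sub>1 * A + m * B \<ge> m" "k\<^sub>2 * B + n * A \<ge> n"
  shows "A + B \<ge> 1"
proof (cases "A \<le> 0 \<or> B \<le> 0")
  case True
  then show ?thesis
  proof
    assume "A \<le> 0"
    then have "k\<^sub>2 * (1 - A) \<le> n * (1 - A)" using assms(4) by (intro mult_right_mono) auto
    then have "k\<^sub>2 * (1 - A) \<le> k\<^sub>2 * B" using assms(6) by (simp add: algebra_simps)
    then show ?thesis using assms(3) by simp
  next
    assume "B \<le> 0"
    then have "k\<^sub>1 * (1 - B) \<le> m * (1 - B)" using assms(2) by (intro mult_right_mono) auto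
    then have "k\<^sub>1 * (1 - B) \<le> k\<^sub>1 * A" using assms(5) by (simp add: algebra_simps)
    then show ?thesis using assms(1) by simp
  qed
qed simp

lemma sum_Inl_Inr:
  fixes f :: "'a + 'b \<Rightarrow> 'c::comm_monoid_add"
  assumes "finite A" "finite B"
  shows "sum f (Inl ` A \<union> Inr ` B) = (\<Sum>x\<in>A. f (Inl x)) + (\<Sum>y\<in>B. f (Inr y))"
  using assms by (subst sum.union_disjoint) (auto simp: sum.reindex)

lemma weight_join:
  "finite V\<^sub>1 \<Longrightarrow> finite V\<^sub>2 \<Longrightarrow>
    weight (join_verts V\<^sub>1 V\<^sub>2) f = (\<Sum>x\<in>V\<^sub>1. f (Inl x)) + (\<Sum>y\<in>V\<^sub>2. f (Inr y))"
  by (simp add: weight_def join_verts_def sum_Inl_Inr)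

lemma closed_nbhd_join_Inl:
  "x \<in> V\<^sub>1 \<Longrightarrow> closed_nbhd (join_verts V\<^sub>1 V\<^sub>2) (join_adj V\<^sub>1 E\<^sub>1 V\<^sub>2 E\<^sub>2) (Inl x)
     = Inl ` closed_nbhd V\<^sub>1 E\<^sub>1 x \<union> Inr ` V\<^sub>2"
  by (auto simp: closed_nbhd_def join_verts_def elim: join_adj.elims)

lemma closed_nbhd_join_Inr:
  "y \<in> V\<^sub>2 \<Longrightarrow> closed_nbhd (join_verts V\<^sub>1 V\<^sub>2) (join_adj V\<^sub>1 E\<^sub>1 V\<^sub>2 E\<^sub>2) (Inr y)
     = Inl ` V\<^sub>1 \<union> Inr ` closed_nbhd V\<^sub>2 E\<^sub>2 y"
  by (auto simp: closed_nbhd_def join_verts_def elim: join_adj.elims)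

lemma sum_closed_nbhd_join_Inl:
  assumes "finite V\<^sub>1" "finite V\<^sub>2" "x \<in> V\<^sub>1"
  shows "(\<Sum>v\<in>closed_nbhd (join_verts V\<^sub>1 V\<^sub>2) (join_adj V\<^sub>1 E\<^sub>1 V\<^sub>2 E\<^sub>2) (Inl x). f v)
     = (\<Sum>u\<in>closed_nbhd V\<^sub>1 E\<^sub>1 x. f (Inl u)) + (\<Sum>y\<in>V\<^sub>2. f (Inr y))"
  using assms by (simp add: closed_nbhd_join_Inl sum_Inl_Inr finite_closed_nbhd)

lemma sum_closed_nbhd_join_Inr:
  assumes "finite V\<^sub>1" "finite V\<^sub>2" "y \<in> V\<^sub>2"
  shows "(\<Sum>v\<in>closed_nbhd (join_verts V\<^sub>1 V\<^sub>2) (join_adj V\<^sub>1 E\<^sub>1 V\<^sub>2 E\<^sub>2) (Inr y). f v)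
     = (\<Sum>x\<in>V\<^sub>1. f (Inl x)) + (\<Sum>u\<in>closed_nbhd V\<^sub>2 E\<^sub>2 y. f (Inr u))"
  using assms by (simp add: closed_nbhd_join_Inr sum_Inl_Inr finite_closed_nbhd)

lemma card_closed_nbhd_bounds:
  "finite V \<Longrightarrow> x \<in> V \<Longrightarrow> 0 < card (closed_nbhd V E x) \<and> card (closed_nbhd V E x) \<le> card V"
  by (auto simp: card_gt_0_iff finite_closed_nbhd closed_nbhd_def intro: card_mono)

lemma SRDF_nbhd_sum_ge: "is_SRDF V E f \<Longrightarrow> x \<in> V \<Longrightarrow> (\<Sum>y\<in>closed_nbhd V E x. f y) \<ge> 1"
  by (simp add: is_SRDF_def)

lemma SRDF_join_regular_weight_ge_1:
  fixes f :: "'a + 'b \<Rightarrow> int"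
  assumes fin: "finite V\<^sub>1" "finite V\<^sub>2" and ne: "V\<^sub>1 \<noteq> {}" "V\<^sub>2 \<noteq> {}"
    and sym: "\<And>x y. E\<^sub>1 x y \<Longrightarrow> E\<^sub>1 y x" "\<And>x y. E\<^sub>2 x y \<Longrightarrow> E\<^sub>2 y x"
    and reg: "\<And>x. x \<in> V\<^sub>1 \<Longrightarrow> card (closed_nbhd V\<^sub>1 E\<^sub>1 x) = k\<^sub>1"
      "\<And>y. y \<in> V\<^sub>2 \<Longrightarrow> card (closed_nbhd V\<^sub>2 E\<^sub>2 y) = k\<^sub>2"
    and f: "is_SRDF (join_verts V\<^sub>1 V\<^sub>2) (join_adj V\<^sub>1 E\<^sub>1 V\<^sub>2 E\<^sub>2) f"
  shows "weight (join_verts V\<^sub>1 V\<^sub>2) f \<ge> 1"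
proof -
  define A where "A = (\<Sum>x\<in>V\<^sub>1. f (Inl x))"
  define B where "B = (\<Sum>y\<in>V\<^sub>2. f (Inr y))"
  have side\<^sub>1: "int k\<^sub>1 * A + int (card V\<^sub>1) * B \<ge> int (card V\<^sub>1)"
    unfolding A_def B_def
  proof (rule regular_side_bound[OF fin(1) sym(1) reg(1)])
    fix x assume x: "x \<in> V\<^sub>1"
    then have "Inl x \<in> join_verts V\<^sub>1 V\<^sub>2" by (simp add: join_verts_def)
    from SRDF_nbhd_sum_ge[OF f this]
    show "(\<Sum>u\<in>closed_nbhd V\<^sub>1 E\<^sub>1 x. f (Inl u)) + (\<Sum>y\<in>V\<^sub>2. f (Inr y)) \<ge> 1"
      by (simp only: sum_closed_nbhd_join_Inl[OF fin x])
  qed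
  have side\<^sub>2: "int k\<^sub>2 * B + int (card V\<^sub>2) * A \<ge> int (card V\<^sub>2)"
    unfolding A_def B_def
  proof (rule regular_side_bound[OF fin(2) sym(2) reg(2)])
    fix y assume y: "y \<in> V\<^sub>2"
    then have "Inr y \<in> join_verts V\<^sub>1 V\<^sub>2" by (simp add: join_verts_def)
    from SRDF_nbhd_sum_ge[OF f this]
    show "(\<Sum>u\<in>closed_nbhd V\<^sub>2 E\<^sub>2 y. f (Inr u)) + (\<Sum>x\<in>V\<^sub>1. f (Inl x)) \<ge> 1"
      by (simp only: sum_closed_nbhd_join_Inr[OF fin y] add.commute)
  qed
  obtain x y where "x \<in> V\<^sub>1" "y \<in> V\<^sub>2" using ne by blast
  then have "0 < k\<^sub>1" "k\<^sub>1 \<le> card V\<^sub>1" "0 < k\<^sub>2" "k\<^sub>2 \<le> card V\<^sub>2"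
    using card_closed_nbhd_bounds[OF fin(1), of x E\<^sub>1] card_closed_nbhd_bounds[OF fin(2), of y E\<^sub>2] reg
    by auto
  then have "A + B \<ge> 1"
    using two_sided_bound[of "int k\<^sub>1" "int (card V\<^sub>1)" "int k\<^sub>2" "int (card V\<^sub>2)"] side\<^sub>1 side\<^sub>2
    by simp
  then show ?thesis by (simp add: weight_join fin A_def B_def)
qed

lemma SRDF_join_of_halves:
  fixes F\<^sub>1 :: "'a \<Rightarrow> int" and F\<^sub>2 :: "'b \<Rightarrow> int"
  assumes fin: "finite V\<^sub>1" "finite V\<^sub>2"
    and vals: "\<And>x. x \<in> V\<^sub>1 \<Longrightarrow> F\<^sub>1 x \<in> {-1, 1, 2}" "\<And>y. y \<in> V\<^sub>2 \<Longrightarrow> F\<^sub>2 y \<in> {-1, 1, 2}"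
    and nbhd: "\<And>x. x \<in> V\<^sub>1 \<Longrightarrow> (\<Sum>u\<in>closed_nbhd V\<^sub>1 E\<^sub>1 x. F\<^sub>1 u) \<ge> -1"
      "\<And>y. y \<in> V\<^sub>2 \<Longrightarrow> (\<Sum>u\<in>closed_nbhd V\<^sub>2 E\<^sub>2 y. F\<^sub>2 u) \<ge> -1"
    and total: "(\<Sum>x\<in>V\<^sub>1. F\<^sub>1 x) = 2" "(\<Sum>y\<in>V\<^sub>2. F\<^sub>2 y) = 2"
    and two: "a \<in> V\<^sub>1" "F\<^sub>1 a = 2" "b \<in> V\<^sub>2" "F\<^sub>2 b = 2"
  shows "is_SRDF (join_verts V\<^sub>1 V\<^sub>2) (join_adj V\<^sub>1 E\<^sub>1 V\<^sub>2 E\<^sub>2) (case_sum F\<^sub>1 F\<^sub>2)"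
    and "weight (join_verts V\<^sub>1 V\<^sub>2) (case_sum F\<^sub>1 F\<^sub>2) = 4"
proof -
  have "(\<Sum>w\<in>closed_nbhd (join_verts V\<^sub>1 V\<^sub>2) (join_adj V\<^sub>1 E\<^sub>1 V\<^sub>2 E\<^sub>2) v. case_sum F\<^sub>1 F\<^sub>2 w) \<ge> 1"
    if "v \<in> join_verts V\<^sub>1 V\<^sub>2" for v
  proof (cases v)
    case (Inl x)
    with that have "x \<in> V\<^sub>1" by (auto simp: join_verts_def)
    with Inl show ?thesis using nbhd(1)[of x] total(2) by (simp add: sum_closed_nbhd_join_Inl[OF fin])
  next
    case (Inr y)
    with that have "y \<in> V\<^sub>2" by (auto simp: join_verts_def)
    with Inr show ?thesis using nbhd(2)[of y] total(1) by (simp add: sum_closed_nbhd_join_Inr[OF fin])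
  qed
  moreover have "\<exists>w\<in>join_verts V\<^sub>1 V\<^sub>2. join_adj V\<^sub>1 E\<^sub>1 V\<^sub>2 E\<^sub>2 v w \<and> case_sum F\<^sub>1 F\<^sub>2 w = 2"
    if "v \<in> join_verts V\<^sub>1 V\<^sub>2" for v
    using that two by (force simp: join_verts_def)
  moreover have "case_sum F\<^sub>1 F\<^sub>2 v \<in> {-1, 1, 2}" if "v \<in> join_verts V\<^sub>1 V\<^sub>2" for v
    using that vals by (force simp: join_verts_def)
  ultimately show "is_SRDF (join_verts V\<^sub>1 V\<^sub>2) (join_adj V\<^sub>1 E\<^sub>1 V\<^sub>2 E\<^sub>2) (case_sum F\<^sub>1 F\<^sub>2)"
    unfolding is_SRDF_def by blast
  show "weight (join_verts V\<^sub>1 V\<^sub>2) (case_sum F\<^sub>1 F\<^sub>2) = 4"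
    using total by (simp add: weight_join fin)
qed

lemma gamma_sR_bounds:
  assumes "finite V" and lower: "\<And>f. is_SRDF V E f \<Longrightarrow> weight V f \<ge> c" and "is_SRDF V E f\<^sub>0"
  shows "c \<le> gamma_sR V E \<and> gamma_sR V E \<le> weight V f\<^sub>0"
proof -
  let ?W = "{weight V f | f. is_SRDF V E f}"
  have "weight V f \<in> {- int (card V) .. 2 * int (card V)}" if "is_SRDF V E f" for f
  proof -
    have "\<forall>x\<in>V. f x \<in> {-1, 1, 2}" using that by (simp add: is_SRDF_def)
    then have "(\<Sum>x\<in>V. - 1) \<le> (\<Sum>x\<in>V. f x)" "(\<Sum>x\<in>V. f x) \<le> (\<Sum>x\<in>V. 2)"
      by (intro sum_mono; auto)+
    then show ?thesis by (simp add: weight_def)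
  qed
  then have fin: "finite ?W" by (auto intro: finite_subset[of _ "{- int (card V) .. 2 * int (card V)}"])
  have f\<^sub>0: "weight V f\<^sub>0 \<in> ?W" using \<open>is_SRDF V E f\<^sub>0\<close> by blast
  have "Min ?W \<in> ?W" using Min_in[OF fin] f\<^sub>0 by blast
  moreover have "Min ?W \<le> weight V f\<^sub>0" using Min_le[OF fin f\<^sub>0] .
  ultimately show ?thesis using lower by (auto simp: gamma_sR_def)
qed

lemma cycle_adj_sym: "cycle_adj m x y \<Longrightarrow> cycle_adj m y x"
  by (auto simp: cycle_adj_def)

lemma mod_succ_less: "(x::nat) < m \<Longrightarrow> (x + 1) mod m = (if x + 1 = m then 0 else x + 1)"
  by auto

lemma mod_pred_less:
  assumes "(x::nat) < m" shows "(x + m - 1) mod m = (if x = 0 then m - 1 else x - 1)"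
proof (cases x)
  case (Suc k)
  then have "x + m - 1 = k + m" by simp
  with Suc assms show ?thesis by simp
qed (use assms in simp)

lemma cycle_adj_iff:
  assumes "3 \<le> m" "x < m" "y < m"
  shows "cycle_adj m x y \<longleftrightarrow> y = (x + 1) mod m \<or> y = (x + m - 1) mod m"
  unfolding cycle_adj_def mod_succ_less[OF assms(2)] mod_succ_less[OF assms(3)] mod_pred_less[OF assms(2)]
  using assms by auto

lemma closed_nbhd_cycle:
  assumes "3 \<le> m" "x < m"
  shows "closed_nbhd (cycle_verts m) (cycle_adj m) x = {x, (x + 1) mod m, (x + m - 1) mod m}"
  using assms cycle_adj_iff[OF assms] by (auto simp: closed_nbhd_def cycle_verts_def)

lemma card_closed_nbhd_cycle:
  assumes "3 \<le> m" "x < m"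
  shows "card (closed_nbhd (cycle_verts m) (cycle_adj m) x) = 3"
  unfolding closed_nbhd_cycle[OF assms] mod_succ_less[OF assms(2)] mod_pred_less[OF assms(2)]
  using assms by auto

lemma sum_closed_nbhd_cycle:
  assumes "3 \<le> m" "x < m"
  shows "(\<Sum>y\<in>closed_nbhd (cycle_verts m) (cycle_adj m) x. F y)
     = F x + F ((x + 1) mod m) + F ((x + m - 1) mod m)"
proof -
  have "x \<noteq> (x + 1) mod m" "x \<noteq> (x + m - 1) mod m" "(x + 1) mod m \<noteq> (x + m - 1) mod m"
    using card_closed_nbhd_cycle[OF assms] unfolding closed_nbhd_cycle[OF assms]
    by (auto simp: card_insert_if split: if_splits)
  then show ?thesis by (simp add: closed_nbhd_cycle[OF assms] add.assoc)
qed

definition cycle_labelling :: "nat \<Rightarrow> nat \<Rightarrow> int" where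
  "cycle_labelling m i = (if i = 0 \<or> (i = 2 \<and> even m) then 2 else if even i then 1 else -1)"

lemma cycle_labelling_range: "cycle_labelling m i \<in> {-1, 1, 2}"
  and cycle_labelling_0: "cycle_labelling m 0 = 2"
  by (simp_all add: cycle_labelling_def)

lemma sum_alternating_signs: "(\<Sum>i<m. (-1::int) ^ i) = (if even m then 0 else 1)"
  by (induction m) auto

lemma sum_cycle_labelling:
  assumes "3 \<le> m"
  shows "(\<Sum>i\<in>cycle_verts m. cycle_labelling m i) = 2"
proof -
  have "cycle_labelling m i = (-1) ^ i + (if i = 0 then 1 else 0) + (if i = 2 \<and> even m then 1 else 0)"
    for i
    by (simp add: cycle_labelling_def)
  then have "(\<Sum>i\<in>cycle_verts m. cycle_labelling m i)
      = (\<Sum>i<m. (-1) ^ i) + (\<Sum>i<m. if i = 0 then 1 else 0) + (\<Sum>i<m. if i = 2 \<and> even m then 1 else 0)"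
    by (simp add: cycle_verts_def lessThan_atLeast0 sum.distrib)
  also have "\<dots> = 2"
    using assms by (simp add: sum_alternating_signs sum.delta')
  finally show ?thesis .
qed

lemma sum_closed_nbhd_cycle_labelling:
  assumes "3 \<le> m" "x < m"
  shows "(\<Sum>y\<in>closed_nbhd (cycle_verts m) (cycle_adj m) x. cycle_labelling m y) \<ge> -1"
proof -
  \<comment> \<open>of two cyclically consecutive positions one is even, hence labelled at least 1\<close>
  have "even x \<or> even ((x + 1) mod m)"
    unfolding mod_succ_less[OF assms(2)] by auto
  then show ?thesis
    unfolding sum_closed_nbhd_cycle[OF assms] by (auto simp: cycle_labelling_def)
qed

theorem mainTheorem5:
  fixes m n :: nat
  assumes "m \<ge> 3" and "n \<ge> 3"
  shows "1 \<le> gamma_sR (join_verts (cycle_verts m) (cycle_verts n))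
                       (join_adj (cycle_verts m) (cycle_adj m) (cycle_verts n) (cycle_adj n))
       \<and> gamma_sR (join_verts (cycle_verts m) (cycle_verts n))
                       (join_adj (cycle_verts m) (cycle_adj m) (cycle_verts n) (cycle_adj n)) \<le> 4"
proof -
  let ?V = "join_verts (cycle_verts m) (cycle_verts n)"
  let ?E = "join_adj (cycle_verts m) (cycle_adj m) (cycle_verts n) (cycle_adj n)"
  let ?f = "case_sum (cycle_labelling m) (cycle_labelling n)"
  have fin: "finite (cycle_verts k)" for k
    by (simp add: cycle_verts_def)
  have ne: "0 \<in> cycle_verts k" if "3 \<le> k" for k
    using that by (simp add: cycle_verts_def)
  have nbhd: "(\<Sum>y\<in>closed_nbhd (cycle_verts k) (cycle_adj k) x. cycle_labelling k y) \<ge> -1"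
    if "3 \<le> k" "x \<in> cycle_verts k" for k x
    using that sum_closed_nbhd_cycle_labelling by (simp add: cycle_verts_def)
  have lower: "weight ?V f \<ge> 1" if "is_SRDF ?V ?E f" for f
    using SRDF_join_regular_weight_ge_1[OF fin fin _ _ cycle_adj_sym cycle_adj_sym _ _ that] ne assms
      card_closed_nbhd_cycle by (force simp: cycle_verts_def)
  note halves = SRDF_join_of_halves[OF fin fin cycle_labelling_range cycle_labelling_range
      nbhd[OF assms(1)] nbhd[OF assms(2)] sum_cycle_labelling[OF assms(1)] sum_cycle_labelling[OF assms(2)]
      ne[OF assms(1)] cycle_labelling_0 ne[OF assms(2)] cycle_labelling_0]
  have "finite ?V" by (simp add: join_verts_def fin)
  from gamma_sR_bounds[OF this lower halves(1)] show ?thesis by (simp add: halves(2))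
qed

end
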